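(* Let $\omega\in\{0,\infty\}$ and let $f,g:(0,\infty)\to(0,\infty)$ be such that (1) $f$ is nondecreasing; (2) $g$ is $\rho$-regularly varying at $\omega$ for some $\rho>0$, i.e. $\lim_{t\to\omega}g(tx)/g(t)=x^\rho$ for all $x>0$; (3) $\lim_{x\to\omega}f(x)/g(x)=\alpha\in[0,\infty)$. If $M_n\to\omega$ and $u_n\to u\in[0,\infty)$ (with $M_n,u_n>0$), then $\lim_{n\to\infty}f(M_nu_n)/g(M_n)=\alpha u^\rho$. *)

theory Defs
  imports Complex_Main
begin

definition omega_filter :: "bool \<Rightarrow> real filter" where
  "omega_filter at_infty = (if at_infty then at_top else at_right 0)"

end

theory Submission
  imports Defs
begin

text \<open>
  For fixed \<open>x > 0\<close> the quotient factors as
  \<open>f(M\<^sub>n x)/g(M\<^sub>n) = f(M\<^sub>n x)/g(M\<^sub>n x) \<cdot> g(M\<^sub>n x)/g(M\<^sub>n) \<rightarrow> \<alpha> x\<^sup>\<rho>\<close>,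
  since \<open>M\<^sub>n x \<rightarrow> \<omega>\<close> as well.  The functions \<open>v \<mapsto> f(M\<^sub>n v)/g(M\<^sub>n)\<close> are
  nondecreasing, so if \<open>a < u\<^sub>n < b\<close> eventually, the quotient at \<open>u\<^sub>n\<close> is squeezed
  between its values at \<open>a\<close> and \<open>b\<close>, whose limits \<open>\<alpha> a\<^sup>\<rho>\<close>, \<open>\<alpha> b\<^sup>\<rho>\<close> are close to
  \<open>\<alpha> u\<^sup>\<rho>\<close> by continuity.  For \<open>u = 0\<close> no \<open>a\<close> exists, but then the lower bound \<open>0\<close>
  comes from positivity.
\<close>

lemma filterlim_omega_filter_mult_const:
  assumes "filterlim M (omega_filter \<omega>) F" and "c > 0"
  shows "filterlim (\<lambda>n. M n * c) (omega_filter \<omega>) F"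
proof (cases \<omega>)
  case True
  with assms show ?thesis
    by (simp add: omega_filter_def filterlim_at_top_mult_tendsto_pos[OF tendsto_const])
next
  case False
  with assms(1) have M: "filterlim M (at_right 0) F"
    by (simp add: omega_filter_def)
  then have "(M \<longlongrightarrow> 0) F"
    by (simp add: filterlim_at)
  then have "((\<lambda>n. M n * c) \<longlongrightarrow> 0) F"
    by (rule tendsto_mult_left_zero)
  moreover have "\<forall>\<^sub>F n in F. 0 < M n * c"
    using M \<open>c > 0\<close> by (auto simp: filterlim_at elim: eventually_mono)
  ultimately show ?thesis
    using False by (simp add: omega_filter_def tendsto_imp_filterlim_at_right)
qed

lemma tendsto_scaled_quotient_regularly_varying:
  assumes fg_lim: "((\<lambda>x. f x / g x) \<longlongrightarrow> \<alpha>) (omega_filter \<omega>)"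
    and g_rv: "((\<lambda>t. g (t * x) / g t) \<longlongrightarrow> x powr \<rho>) (omega_filter \<omega>)"
    and g_pos: "\<And>t. t > 0 \<Longrightarrow> g t > 0"
    and M_pos: "\<And>n. M n > 0"
    and M_lim: "filterlim M (omega_filter \<omega>) F"
    and "x > 0"
  shows "((\<lambda>n. f (M n * x) / g (M n)) \<longlongrightarrow> \<alpha> * x powr \<rho>) F"
proof -
  have Mx: "filterlim (\<lambda>n. M n * x) (omega_filter \<omega>) F"
    using filterlim_omega_filter_mult_const[OF M_lim \<open>x > 0\<close>] .
  have "((\<lambda>n. f (M n * x) / g (M n * x) * (g (M n * x) / g (M n))) \<longlongrightarrow> \<alpha> * x powr \<rho>) F"
    using tendsto_mult[OF filterlim_compose[OF fg_lim Mx] filterlim_compose[OF g_rv M_lim]] .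
  moreover have "f (M n * x) / g (M n * x) * (g (M n * x) / g (M n)) = f (M n * x) / g (M n)" for n
    using g_pos[of "M n * x"] M_pos[of n] \<open>x > 0\<close> by simp
  ultimately show ?thesis
    by (simp only:)
qed

lemma mono_on_scaled_quotient:
  fixes f :: "real \<Rightarrow> real"
  assumes "mono_on {0<..} f" and "m > 0" and "c \<ge> 0"
  shows "mono_on {0<..} (\<lambda>v. f (m * v) / c)"
proof (rule mono_onI)
  fix a b :: real
  assume "a \<in> {0<..}" "b \<in> {0<..}" "a \<le> b"
  with assms have "f (m * a) \<le> f (m * b)"
    by (intro mono_onD[OF assms(1)]) auto
  with \<open>c \<ge> 0\<close> show "f (m * a) / c \<le> f (m * b) / c"
    by (simp add: divide_right_mono)
qed

lemma eventually_mono_on_family_less: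
  fixes h :: "'a \<Rightarrow> real \<Rightarrow> real"
  assumes mono: "\<And>n. mono_on {0<..} (h n)"
    and lim: "\<And>v. v > 0 \<Longrightarrow> ((\<lambda>n. h n v) \<longlongrightarrow> \<phi> v) F"
    and cont: "(\<phi> \<longlongrightarrow> \<phi> u) (at u within {0<..})"
    and "u \<ge> 0"
    and w_lim: "(w \<longlongrightarrow> u) F" and w_pos: "\<And>n. w n > 0"
    and "\<phi> u < y"
  shows "\<forall>\<^sub>F n in F. h n (w n) < y"
proof -
  obtain d where "d > 0" and d: "\<And>v. v > 0 \<Longrightarrow> v \<noteq> u \<Longrightarrow> dist v u < d \<Longrightarrow> \<phi> v < y"
    using order_tendstoD(2)[OF cont \<open>\<phi> u < y\<close>] by (auto simp: eventually_at)
  define b where "b = u + d / 2"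
  have "b > 0" "u < b" "\<phi> b < y"
    using \<open>u \<ge> 0\<close> \<open>d > 0\<close> d[of b] by (auto simp: b_def dist_real_def)
  have "\<forall>\<^sub>F n in F. w n < b" "\<forall>\<^sub>F n in F. h n b < y"
    using order_tendstoD(2)[OF w_lim \<open>u < b\<close>] order_tendstoD(2)[OF lim[OF \<open>b > 0\<close>] \<open>\<phi> b < y\<close>] .
  then show ?thesis
  proof eventually_elim
    case (elim n)
    then show ?case
      using mono_onD[OF mono[of n], of "w n" b] w_pos[of n] \<open>b > 0\<close> by force
  qed
qed

lemma eventually_mono_on_family_greater:
  fixes h :: "'a \<Rightarrow> real \<Rightarrow> real"
  assumes mono: "\<And>n. mono_on {0<..} (h n)"
    and lim: "\<And>v. v > 0 \<Longrightarrow> ((\<lambda>n. h n v) \<longlongrightarrow> \<phi> v) F"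
    and cont: "(\<phi> \<longlongrightarrow> \<phi> u) (at u within {0<..})"
    and "u > 0"
    and w_lim: "(w \<longlongrightarrow> u) F"
    and "y < \<phi> u"
  shows "\<forall>\<^sub>F n in F. y < h n (w n)"
proof -
  obtain d where "d > 0" and d: "\<And>v. v > 0 \<Longrightarrow> v \<noteq> u \<Longrightarrow> dist v u < d \<Longrightarrow> y < \<phi> v"
    using order_tendstoD(1)[OF cont \<open>y < \<phi> u\<close>] by (auto simp: eventually_at)
  define a where "a = max (u / 2) (u - d / 2)"
  have "a > 0" "a < u" "y < \<phi> a"
    using \<open>u > 0\<close> \<open>d > 0\<close> d[of a] by (auto simp: a_def dist_real_def)
  have "\<forall>\<^sub>F n in F. a < w n" "\<forall>\<^sub>F n in F. y < h n a"
    using order_tendstoD(1)[OF w_lim \<open>a < u\<close>] order_tendstoD(1)[OF lim[OF \<open>a > 0\<close>] \<open>y < \<phi> a\<close>] .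
  then show ?thesis
  proof eventually_elim
    case (elim n)
    then show ?case
      using mono_onD[OF mono[of n], of a "w n"] \<open>a > 0\<close> by force
  qed
qed

lemma tendsto_mult_powr_at_within_pos:
  fixes \<alpha> \<rho> u :: real
  assumes "\<rho> > 0"
  shows "((\<lambda>v. \<alpha> * v powr \<rho>) \<longlongrightarrow> \<alpha> * u powr \<rho>) (at u within {0<..})"
proof -
  have "\<forall>\<^sub>F v in at u within {0<..}. 0 \<le> v"
    by (auto simp: eventually_at_filter)
  then show ?thesis
    by (intro tendsto_mult tendsto_const tendsto_powr2 tendsto_ident_at assms)
qed

theorem lemmaB2:
  fixes f g :: "real \<Rightarrow> real" and \<omega> :: bool and \<rho> \<alpha> u :: real
    and M uu :: "nat \<Rightarrow> real"
  assumes f_pos: "\<And>x. x > 0 \<Longrightarrow> f x > 0"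
    and g_pos: "\<And>x. x > 0 \<Longrightarrow> g x > 0"
    and f_mono: "mono_on {0<..} f"
    and rho_pos: "\<rho> > 0"
    and g_rv: "\<And>x. x > 0 \<Longrightarrow> ((\<lambda>t. g (t * x) / g t) \<longlongrightarrow> x powr \<rho>) (omega_filter \<omega>)"
    and alpha_nonneg: "\<alpha> \<ge> 0"
    and fg_lim: "((\<lambda>x. f x / g x) \<longlongrightarrow> \<alpha>) (omega_filter \<omega>)"
    and M_pos: "\<And>n. M n > 0"
    and M_lim: "filterlim M (omega_filter \<omega>) sequentially"
    and uu_pos: "\<And>n. uu n > 0"
    and u_nonneg: "u \<ge> 0"
    and uu_lim: "uu \<longlonglongrightarrow> u"
  shows "(\<lambda>n. f (M n * uu n) / g (M n)) \<longlonglongrightarrow> \<alpha> * u powr \<rho>"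
proof (rule order_tendstoI)
  let ?h = "\<lambda>n v. f (M n * v) / g (M n)" and ?\<phi> = "\<lambda>v. \<alpha> * v powr \<rho>"
  have mono: "mono_on {0<..} (?h n)" for n
    using mono_on_scaled_quotient[OF f_mono M_pos[of n], of "g (M n)"] g_pos[OF M_pos[of n]] by simp
  have lim: "((\<lambda>n. ?h n v) \<longlongrightarrow> ?\<phi> v) sequentially" if "v > 0" for v
    using tendsto_scaled_quotient_regularly_varying[OF fg_lim g_rv[OF that] g_pos M_pos M_lim that] .
  note cont = tendsto_mult_powr_at_within_pos[OF rho_pos, of \<alpha> u]
  fix y
  show "\<forall>\<^sub>F n in sequentially. ?h n (uu n) < y" if "?\<phi> u < y"
    using eventually_mono_on_family_less[OF mono lim cont u_nonneg uu_lim uu_pos that] by simp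
  show "\<forall>\<^sub>F n in sequentially. y < ?h n (uu n)" if "y < ?\<phi> u"
  proof (cases "u = 0")
    case True
    with that have "y < 0"
      by simp
    have "0 < ?h n (uu n)" for n
      by (intro divide_pos_pos f_pos g_pos mult_pos_pos M_pos uu_pos)
    with \<open>y < 0\<close> show ?thesis
      by (intro always_eventually allI) (rule less_trans)
  next
    case False
    with u_nonneg have "u > 0"
      by simp
    from eventually_mono_on_family_greater[OF mono lim cont this uu_lim that] show ?thesis
      by simp
  qed
qed

end
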